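(* Let $\mathscr{H}$ be a complex Hilbert space and let $N(\cdot)$ be a norm on $\mathbb{B}(\mathscr{H})$. Then the function $w_{(N,e)}(\cdot,\cdot):\mathbb{B}^2(\mathscr{H})\to[0,\infty)$ defined by $$w_{(N,e)}(B,C)=\sup_{\lambda_1,\lambda_2\in\mathbb{C},\ |\lambda_1|^2+|\lambda_2|^2\leq 1}\ \sup_{\theta\in\mathbb{R}} N\left(\Re\left(e^{i\theta}(\lambda_1B+\lambda_2C)\right)\right)$$ is a norm on $\mathbb{B}^2(\mathscr{H})=\mathbb{B}(\mathscr{H})\times\mathbb{B}(\mathscr{H})$ (with componentwise addition and scalar multiplication).
   Context: $\mathbb{B}(\mathscr{H})$ denotes the algebra of bounded linear operators on $\mathscr{H}$. For $T\in\mathbb{B}(\mathscr{H})$, $\Re(T)=\frac12(T+T^* )$. *)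

theory Defs
  imports Complex_Main
begin

text \<open>Convention: the inner product is conjugate-linear in the first and linear in the
  second argument (the choice is irrelevant for the statement).\<close>

class chilbert = ab_group_add +
  fixes scaleC :: "complex \<Rightarrow> 'a \<Rightarrow> 'a"  (infixr "*\<^sub>C" 75)
    and cinner :: "'a \<Rightarrow> 'a \<Rightarrow> complex"
  assumes scaleC_add_right: "a *\<^sub>C (x + y) = a *\<^sub>C x + a *\<^sub>C y"
    and scaleC_add_left: "(a + b) *\<^sub>C x = a *\<^sub>C x + b *\<^sub>C x"
    and scaleC_scaleC: "a *\<^sub>C (b *\<^sub>C x) = (a * b) *\<^sub>C x"
    and scaleC_one: "1 *\<^sub>C x = x"
    and cinner_commute: "cinner x y = cnj (cinner y x)"
    and cinner_add_left: "cinner (x + y) z = cinner x z + cinner y z"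
    and cinner_scaleC_left: "cinner (a *\<^sub>C x) y = cnj a * cinner x y"
    and cinner_ge_zero: "0 \<le> Re (cinner x x)"
    and cinner_eq_zero_iff: "cinner x x = 0 \<longleftrightarrow> x = 0"
    and chilbert_complete:
      "(\<forall>e>0. \<exists>M. \<forall>m\<ge>M. \<forall>n\<ge>M. sqrt (Re (cinner ((X::nat \<Rightarrow> 'a) m - X n) (X m - X n))) < e)
        \<Longrightarrow> (\<exists>L. \<forall>e>0. \<exists>M. \<forall>n\<ge>M. sqrt (Re (cinner (X n - L) (X n - L))) < e)"

definition cnorm :: "'a::chilbert \<Rightarrow> real" where
  "cnorm x = sqrt (Re (cinner x x))"

definition bounded_op :: "('a::chilbert \<Rightarrow> 'a) \<Rightarrow> bool" where
  "bounded_op T \<longleftrightarrow>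
     (\<forall>x y. T (x + y) = T x + T y) \<and> (\<forall>a x. T (a *\<^sub>C x) = a *\<^sub>C T x) \<and>
     (\<exists>K. \<forall>x. cnorm (T x) \<le> K * cnorm x)"

definition adjoint :: "('a::chilbert \<Rightarrow> 'a) \<Rightarrow> ('a \<Rightarrow> 'a)" where
  "adjoint T = (THE S. \<forall>x y. cinner (T x) y = cinner x (S y))"

definition op_Re :: "('a::chilbert \<Rightarrow> 'a) \<Rightarrow> ('a \<Rightarrow> 'a)" where
  "op_Re T = (\<lambda>x. (1/2) *\<^sub>C (T x + adjoint T x))"

definition is_op_norm :: "(('a::chilbert \<Rightarrow> 'a) \<Rightarrow> real) \<Rightarrow> bool" where
  "is_op_norm N \<longleftrightarrow>
     (\<forall>T. bounded_op T \<longrightarrow> 0 \<le> N T \<and> (N T = 0 \<longleftrightarrow> T = (\<lambda>x. 0))) \<and>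
     (\<forall>c T. bounded_op T \<longrightarrow> N (\<lambda>x. c *\<^sub>C T x) = cmod c * N T) \<and>
     (\<forall>S T. bounded_op S \<longrightarrow> bounded_op T \<longrightarrow> N (\<lambda>x. S x + T x) \<le> N S + N T)"

definition wNe_set :: "(('a::chilbert \<Rightarrow> 'a) \<Rightarrow> real) \<Rightarrow> ('a \<Rightarrow> 'a) \<Rightarrow> ('a \<Rightarrow> 'a) \<Rightarrow> real set" where
  "wNe_set N B C =
     {N (op_Re (\<lambda>x. exp (\<i> * of_real \<theta>) *\<^sub>C (l1 *\<^sub>C B x + l2 *\<^sub>C C x))) | l1 l2 \<theta>.
        (cmod l1)\<^sup>2 + (cmod l2)\<^sup>2 \<le> 1}"

definition wNe :: "(('a::chilbert \<Rightarrow> 'a) \<Rightarrow> real) \<Rightarrow> ('a \<Rightarrow> 'a) \<Rightarrow> ('a \<Rightarrow> 'a) \<Rightarrow> real" where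
  "wNe N B C = Sup (wNe_set N B C)"

end

theory Submission
  imports Defs
begin

text \<open>Each N (Re (e^(i\<theta>) (\<lambda>1 B + \<lambda>2 C))) is N composed with a real-linear map of (B, C),
  hence subadditive in (B, C); so is their supremum, which is finite because
  N (Re T) \<le> (N T + N (adjoint T)) / 2. Multiplying (B, C) by c = |c| e^(i\<phi>) only shifts \<theta> by \<phi>,
  which gives complex homogeneity. If w_(N,e)(B, C) = 0 then Re B = Re (iB) = 0, and
  B = Re B - i Re (iB) vanishes. As the adjoint is defined by a description, all of this rests on
  its existence, i.e. on the Riesz representation theorem: a bounded functional g \<noteq> 0 is
  represented by a multiple of the vector of least norm in the closed convex set {g = 1}.\<close>

section \<open>Complex inner product spaces\<close>

global_interpretation scaleC: vector_space "scaleC :: complex \<Rightarrow> 'a \<Rightarrow> 'a::chilbert"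
  by unfold_locales (simp_all add: scaleC_add_right scaleC_add_left scaleC_scaleC scaleC_one)

lemma cinner_add_right: "cinner x (y + z) = cinner x y + cinner (x::'a::chilbert) z"
  by (metis cinner_commute cinner_add_left complex_cnj_add)

lemma cinner_scaleC_right: "cinner x (a *\<^sub>C y) = a * cinner (x::'a::chilbert) y"
  by (metis cinner_commute cinner_scaleC_left complex_cnj_mult complex_cnj_cnj)

lemma cinner_zero_left [simp]: "cinner 0 (y::'a::chilbert) = 0"
  using cinner_scaleC_left[of 0 0 y] by simp

lemma cinner_zero_right [simp]: "cinner (x::'a::chilbert) 0 = 0"
  using cinner_scaleC_right[of x 0 0] by simp

lemma cinner_diff_right: "cinner x (y - z) = cinner x y - cinner (x::'a::chilbert) z"
  using cinner_add_right[of x "y - z" z] by simp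

lemma cinner_ext: "(\<And>x. cinner x u = cinner x v) \<Longrightarrow> u = (v::'a::chilbert)"
  by (metis cinner_diff_right cinner_eq_zero_iff eq_iff_diff_eq_0)

lemma cnorm_nonneg: "0 \<le> cnorm x"
  by (simp add: cnorm_def cinner_ge_zero)

lemma cinner_self_eq_cnorm_sq: "cinner x x = of_real ((cnorm x)\<^sup>2)"
proof -
  have "Im (cinner x x) = 0"
    using cinner_commute[of x x] by (metis cnj.sel(2) neg_equal_zero)
  then show ?thesis
    by (simp add: cnorm_def cinner_ge_zero complex_eq_iff)
qed

lemma cnorm_eq_0_iff: "cnorm x = 0 \<longleftrightarrow> x = 0"
  by (metis cinner_eq_zero_iff cinner_self_eq_cnorm_sq of_real_eq_0_iff zero_eq_power2)

lemma cnorm_zero [simp]: "cnorm 0 = 0"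
  by (simp add: cnorm_eq_0_iff)

lemma cnorm_add_scaleC_sq:
  "(cnorm (x + t *\<^sub>C y))\<^sup>2 = (cnorm x)\<^sup>2 + 2 * Re (t * cinner x y) + (cmod t)\<^sup>2 * (cnorm y)\<^sup>2"
proof -
  have t: "cnj t * t = of_real ((cmod t)\<^sup>2)"
    by (metis complex_norm_square mult.commute)
  have "cinner (x + t *\<^sub>C y) (x + t *\<^sub>C y)
      = cinner x x + (t * cinner x y + cnj (t * cinner x y)) + (cnj t * t) * cinner y y"
    by (simp add: cinner_add_left cinner_add_right cinner_scaleC_left cinner_scaleC_right
        cinner_commute[of y x] algebra_simps)
  also have "\<dots> = of_real ((cnorm x)\<^sup>2 + 2 * Re (t * cinner x y) + (cmod t)\<^sup>2 * (cnorm y)\<^sup>2)"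
    by (simp only: cinner_self_eq_cnorm_sq complex_add_cnj t of_real_add of_real_mult)
  finally show ?thesis
    by (simp only: cinner_self_eq_cnorm_sq of_real_eq_iff)
qed

lemma cnorm_scaleC: "cnorm (t *\<^sub>C x) = cmod t * cnorm x"
proof (rule power2_eq_imp_eq)
  show "(cnorm (t *\<^sub>C x))\<^sup>2 = (cmod t * cnorm x)\<^sup>2"
    using cnorm_add_scaleC_sq[of 0 t x] by (simp add: power_mult_distrib)
qed (simp_all add: cnorm_nonneg)

lemma cnorm_add_sq: "(cnorm (x + y))\<^sup>2 = (cnorm x)\<^sup>2 + 2 * Re (cinner x y) + (cnorm y)\<^sup>2"
  using cnorm_add_scaleC_sq[of x 1 y] by simp

lemma cnorm_diff_sq: "(cnorm (x - y))\<^sup>2 = (cnorm x)\<^sup>2 - 2 * Re (cinner x y) + (cnorm y)\<^sup>2"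
  using cnorm_add_scaleC_sq[of x "-1" y] by simp

lemma cnorm_parallelogram:
  "(cnorm (x + y))\<^sup>2 + (cnorm (x - y))\<^sup>2 = 2 * (cnorm x)\<^sup>2 + 2 * (cnorm y)\<^sup>2"
  by (simp add: cnorm_add_sq cnorm_diff_sq)

lemma cnorm_minus_commute: "cnorm (x - y) = cnorm (y - x)"
  using cnorm_scaleC[of "-1" "y - x"] by simp

lemma cinner_Cauchy_Schwarz: "cmod (cinner x y) \<le> cnorm x * cnorm y"
proof (cases "y = 0")
  case False
  define a where "a = cinner x y"
  define q where "q = (cnorm y)\<^sup>2"
  have q: "q > 0"
    using False cnorm_nonneg[of y] by (simp add: q_def cnorm_eq_0_iff)
  define t where "t = - cnj a / of_real q"
  have "t * a = - of_real ((cmod a)\<^sup>2 / q)"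
    by (simp add: t_def mult.commute flip: complex_norm_square)
  moreover have "(cmod t)\<^sup>2 * q = (cmod a)\<^sup>2 / q"
    using q by (simp add: t_def norm_divide power2_eq_square)
  ultimately have "(cnorm (x + t *\<^sub>C y))\<^sup>2 = (cnorm x)\<^sup>2 - (cmod a)\<^sup>2 / q"
    by (simp add: cnorm_add_scaleC_sq a_def q_def)
  then have "(cmod a)\<^sup>2 / q \<le> (cnorm x)\<^sup>2"
    using zero_le_power2[of "cnorm (x + t *\<^sub>C y)"] by linarith
  then have "(cmod a)\<^sup>2 \<le> (cnorm x * cnorm y)\<^sup>2"
    using q by (simp add: q_def pos_divide_le_eq power_mult_distrib)
  then show ?thesis
    unfolding a_def using cnorm_nonneg by (metis power2_le_imp_le mult_nonneg_nonneg)
qed simp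

lemma cnorm_triangle: "cnorm (x + y) \<le> cnorm x + cnorm y"
proof (rule power2_le_imp_le)
  have "Re (cinner x y) \<le> cnorm x * cnorm y"
    using complex_Re_le_cmod cinner_Cauchy_Schwarz order_trans by blast
  then show "(cnorm (x + y))\<^sup>2 \<le> (cnorm x + cnorm y)\<^sup>2"
    by (simp add: cnorm_add_sq power2_sum)
qed (simp add: cnorm_nonneg)

section \<open>The Riesz representation theorem\<close>

lemma chilbert_Cauchy_convergent:
  fixes X :: "nat \<Rightarrow> 'a::chilbert"
  assumes bound: "\<And>m n. (cnorm (X m - X n))\<^sup>2 \<le> a m + a n" and a: "a \<longlonglongrightarrow> 0"
  shows "\<exists>L. (\<lambda>n. cnorm (X n - L)) \<longlonglongrightarrow> 0"
proof -
  have "\<exists>M. \<forall>m\<ge>M. \<forall>n\<ge>M. sqrt (Re (cinner (X m - X n) (X m - X n))) < e" if "e > 0" for e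
  proof -
    obtain M where M: "\<And>n. n \<ge> M \<Longrightarrow> a n < e\<^sup>2 / 2"
      using order_tendstoD(2)[OF a, of "e\<^sup>2 / 2"] \<open>e > 0\<close> by (auto simp: eventually_sequentially)
    have "cnorm (X m - X n) < e" if "m \<ge> M" "n \<ge> M" for m n
    proof (rule power_less_imp_less_base)
      show "(cnorm (X m - X n))\<^sup>2 < e\<^sup>2"
        using bound[of m n] M[OF \<open>m \<ge> M\<close>] M[OF \<open>n \<ge> M\<close>] by linarith
    qed (use \<open>e > 0\<close> in simp)
    then show ?thesis
      unfolding cnorm_def by blast
  qed
  then obtain L where "\<forall>e>0. \<exists>M. \<forall>n\<ge>M. cnorm (X n - L) < e"
    using chilbert_complete[of X] unfolding cnorm_def by blast
  then show ?thesis
    by (auto simp: LIMSEQ_iff cnorm_nonneg)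
qed

lemma cnorm_tendsto:
  assumes "(\<lambda>n. cnorm (X n - L)) \<longlonglongrightarrow> 0"
  shows "(\<lambda>n. cnorm (X n)) \<longlonglongrightarrow> cnorm L"
proof (rule Lim_transform[OF tendsto_const])
  have "\<bar>cnorm (X n) - cnorm L\<bar> \<le> cnorm (X n - L)" for n
    using cnorm_triangle[of "X n - L" L] cnorm_triangle[of "L - X n" "X n"] cnorm_minus_commute[of L "X n"]
    by simp
  then show "(\<lambda>n. cnorm (X n) - cnorm L) \<longlonglongrightarrow> 0"
    by (intro tendsto_0_le[OF assms, of _ 1]) (simp add: cnorm_nonneg)
qed

lemma cnorm_diff_sq_le_of_midpoint:
  assumes "(1/2) *\<^sub>C (x + y) \<in> A" and "\<And>z. z \<in> A \<Longrightarrow> d \<le> (cnorm z)\<^sup>2"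
  shows "(cnorm (x - y))\<^sup>2 \<le> 2 * ((cnorm x)\<^sup>2 - d) + 2 * ((cnorm y)\<^sup>2 - d)"
proof -
  have "x + y = 2 *\<^sub>C ((1/2) *\<^sub>C (x + y))"
    by simp
  then have "(cnorm (x + y))\<^sup>2 = 4 * (cnorm ((1/2) *\<^sub>C (x + y)))\<^sup>2"
    by (metis cnorm_scaleC norm_numeral numeral_Bit0_eq_double power2_eq_square power_mult_distrib)
  also have "\<dots> \<ge> 4 * d"
    using assms by simp
  finally show ?thesis
    using cnorm_parallelogram[of x y] by (simp add: algebra_simps)
qed

lemma ex_min_cnorm:
  fixes A :: "'a::chilbert set"
  assumes "x0 \<in> A"
    and midpoint: "\<And>x y. x \<in> A \<Longrightarrow> y \<in> A \<Longrightarrow> (1/2) *\<^sub>C (x + y) \<in> A"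
    and closed: "\<And>X L. (\<And>n. X n \<in> A) \<Longrightarrow> (\<lambda>n. cnorm (X n - L)) \<longlonglongrightarrow> 0 \<Longrightarrow> L \<in> A"
  shows "\<exists>L\<in>A. \<forall>x\<in>A. cnorm L \<le> cnorm x"
proof -
  define d where "d = (INF x\<in>A. (cnorm x)\<^sup>2)"
  have d_le: "d \<le> (cnorm x)\<^sup>2" if "x \<in> A" for x
    unfolding d_def by (rule cINF_lower[OF bdd_belowI2[of _ 0] that]) simp
  have "\<exists>x\<in>A. (cnorm x)\<^sup>2 < d + inverse (real (Suc n))" for n
    using cInf_lessD[of "(\<lambda>x. (cnorm x)\<^sup>2) ` A"] \<open>x0 \<in> A\<close> by (force simp: d_def)
  then obtain X where X: "\<And>n. X n \<in> A" "\<And>n. (cnorm (X n))\<^sup>2 < d + inverse (real (Suc n))"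
    by metis
  have "(cnorm (X m - X n))\<^sup>2 \<le> 2 * inverse (real (Suc m)) + 2 * inverse (real (Suc n))" for m n
  proof -
    have "(cnorm (X m - X n))\<^sup>2 \<le> 2 * ((cnorm (X m))\<^sup>2 - d) + 2 * ((cnorm (X n))\<^sup>2 - d)"
      by (rule cnorm_diff_sq_le_of_midpoint[OF midpoint[OF X(1) X(1)] d_le])
    with X(2)[of m] X(2)[of n] show ?thesis
      by argo
  qed
  moreover have "(\<lambda>n. 2 * inverse (real (Suc n))) \<longlonglongrightarrow> 0"
    using tendsto_mult_right_zero[OF LIMSEQ_inverse_real_of_nat] by simp
  ultimately obtain L where L: "(\<lambda>n. cnorm (X n - L)) \<longlonglongrightarrow> 0"
    using chilbert_Cauchy_convergent[of X "\<lambda>n. 2 * inverse (real (Suc n))"] by blast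
  have "(cnorm L)\<^sup>2 \<le> d"
  proof (rule LIMSEQ_le_const2)
    show "(\<lambda>n. (cnorm (X n))\<^sup>2 - inverse (real (Suc n))) \<longlonglongrightarrow> (cnorm L)\<^sup>2"
      using tendsto_diff[OF tendsto_power[OF cnorm_tendsto[OF L]] LIMSEQ_inverse_real_of_nat] by simp
    show "\<exists>N. \<forall>n\<ge>N. (cnorm (X n))\<^sup>2 - inverse (real (Suc n)) \<le> d"
      using X(2) by (auto intro: less_imp_le simp: algebra_simps)
  qed
  then have "cnorm L \<le> cnorm x" if "x \<in> A" for x
    using d_le[OF that] by (auto intro: power2_le_imp_le cnorm_nonneg)
  with closed[OF X(1) L] show ?thesis
    by blast
qed

lemma cinner_eq_0_if_cnorm_minimal:
  assumes minimal: "\<And>t. cnorm L \<le> cnorm (L + t *\<^sub>C m)"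
  shows "cinner L m = 0"
proof -
  define b where "b = cinner L m"
  define s where "s = 1 / ((cnorm m)\<^sup>2 + 1)"
  have "0 < (cnorm m)\<^sup>2 + 1"
    by (rule add_nonneg_pos) simp_all
  then have s: "0 < s" "s * (cnorm m)\<^sup>2 < 1"
    by (simp_all add: s_def)
  define t where "t = - of_real s * cnj b"
  have "t * b = - of_real (s * (cmod b)\<^sup>2)"
    by (simp add: t_def mult.assoc mult.commute[of "cnj b"] flip: complex_norm_square)
  moreover have "(cmod t)\<^sup>2 = s\<^sup>2 * (cmod b)\<^sup>2"
    using s by (simp add: t_def norm_mult power_mult_distrib)
  moreover have "(cnorm L)\<^sup>2 \<le> (cnorm (L + t *\<^sub>C m))\<^sup>2"
    by (rule power_mono[OF minimal cnorm_nonneg])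
  ultimately have "0 \<le> - 2 * (s * (cmod b)\<^sup>2) + s\<^sup>2 * (cmod b)\<^sup>2 * (cnorm m)\<^sup>2"
    unfolding cnorm_add_scaleC_sq b_def by simp
  then have "0 \<le> (s * (cmod b)\<^sup>2) * (s * (cnorm m)\<^sup>2 - 2)"
    by (simp add: power2_eq_square algebra_simps)
  with s have "(cmod b)\<^sup>2 \<le> 0"
    by (simp add: zero_le_mult_iff mult_le_0_iff)
  then show ?thesis
    by (simp add: b_def)
qed

theorem riesz_representation:
  fixes g :: "'a::chilbert \<Rightarrow> complex"
  assumes add: "\<And>x y. g (x + y) = g x + g y"
    and scale: "\<And>a x. g (a *\<^sub>C x) = a * g x"
    and bounded: "\<And>x. cmod (g x) \<le> K * cnorm x"
  shows "\<exists>z. \<forall>x. g x = cinner z x"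
proof (cases "\<forall>x. g x = 0")
  case True
  then show ?thesis
    by (intro exI[of _ 0]) simp
next
  case False
  then obtain x1 where "g x1 \<noteq> 0"
    by blast
  have g_diff: "g (x - y) = g x - g y" for x y
    using add[of "x - y" y] by simp
  have "\<exists>L\<in>{x. g x = 1}. \<forall>x\<in>{x. g x = 1}. cnorm L \<le> cnorm x"
  proof (rule ex_min_cnorm)
    show "inverse (g x1) *\<^sub>C x1 \<in> {x. g x = 1}"
      using \<open>g x1 \<noteq> 0\<close> by (simp add: scale)
    show "(1/2) *\<^sub>C (x + y) \<in> {x. g x = 1}" if "x \<in> {x. g x = 1}" "y \<in> {x. g x = 1}" for x y
      using that by (simp add: add scale)
    show "L \<in> {x. g x = 1}" if "\<And>n. X n \<in> {x. g x = 1}" and X: "(\<lambda>n. cnorm (X n - L)) \<longlonglongrightarrow> 0"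
      for X L
    proof -
      have "cmod (g L - 1) \<le> K * cnorm (X n - L)" for n
        using bounded[of "L - X n"] that(1)[of n] cnorm_minus_commute[of L "X n"] by (simp add: g_diff)
      then have "cmod (g L - 1) \<le> K * 0"
        by (intro LIMSEQ_le_const[OF tendsto_mult[OF tendsto_const X]]) blast
      then show ?thesis
        by simp
    qed
  qed
  then obtain L where L: "g L = 1" and minimal: "\<And>x. g x = 1 \<Longrightarrow> cnorm L \<le> cnorm x"
    by blast
  have L_nonzero: "cinner L L \<noteq> 0"
    using L scale[of 0 0] by (auto simp: cinner_eq_zero_iff)
  have orthogonal_decomposition: "cinner L x = g x * cinner L L" for x
  proof -
    have "cinner L (x - g x *\<^sub>C L) = 0"
      by (rule cinner_eq_0_if_cnorm_minimal, rule minimal) (simp add: add scale g_diff L)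
    then show ?thesis
      by (simp add: cinner_diff_right cinner_scaleC_right)
  qed
  have "g x = cinner (cnj (inverse (cinner L L)) *\<^sub>C L) x" for x
    using L_nonzero orthogonal_decomposition[of x] by (simp add: cinner_scaleC_left)
  then show ?thesis
    by blast
qed

section \<open>Adjoints and real parts of bounded operators\<close>

lemma bounded_op_bound:
  assumes "bounded_op T"
  obtains K where "K \<ge> 0" "\<And>x. cnorm (T x) \<le> K * cnorm x"
proof -
  obtain K where K: "\<And>x. cnorm (T x) \<le> K * cnorm x"
    using assms by (auto simp: bounded_op_def)
  have "cnorm (T x) \<le> max K 0 * cnorm x" for x
    using K[of x] mult_right_mono[OF max.cobounded1 cnorm_nonneg] by (rule order_trans)
  then show thesis
    by (rule that[rotated]) simp
qed

lemma bounded_op_add: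
  assumes S: "bounded_op S" and T: "bounded_op T"
  shows "bounded_op (\<lambda>x. S x + T x)"
proof -
  obtain K1 K2 where "\<And>x. cnorm (S x) \<le> K1 * cnorm x" "\<And>x. cnorm (T x) \<le> K2 * cnorm x"
    using S T bounded_op_bound by metis
  then have "cnorm (S x + T x) \<le> (K1 + K2) * cnorm x" for x
    using cnorm_triangle[of "S x" "T x"] by (simp add: distrib_right add_mono order_trans)
  moreover have "S (x + y) + T (x + y) = (S x + T x) + (S y + T y)" for x y
    using S T by (simp add: bounded_op_def add_ac)
  moreover have "S (a *\<^sub>C x) + T (a *\<^sub>C x) = a *\<^sub>C (S x + T x)" for a x
    using S T by (simp add: bounded_op_def scaleC.scale_right_distrib)
  ultimately show ?thesis
    unfolding bounded_op_def by blast
qed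

lemma bounded_op_scaleC:
  assumes T: "bounded_op T"
  shows "bounded_op (\<lambda>x. c *\<^sub>C T x)"
proof -
  obtain K where "K \<ge> 0" "\<And>x. cnorm (T x) \<le> K * cnorm x"
    using T bounded_op_bound by metis
  then have "cnorm (c *\<^sub>C T x) \<le> (cmod c * K) * cnorm x" for x
    by (simp add: cnorm_scaleC mult.assoc mult_left_mono)
  moreover have "c *\<^sub>C T (x + y) = c *\<^sub>C T x + c *\<^sub>C T y" for x y
    using T by (simp add: bounded_op_def scaleC.scale_right_distrib)
  moreover have "c *\<^sub>C T (a *\<^sub>C x) = a *\<^sub>C (c *\<^sub>C T x)" for a x
    using T by (simp add: bounded_op_def scaleC.scale_left_commute)
  ultimately show ?thesis
    unfolding bounded_op_def by blast
qed

lemma bounded_op_zero: "bounded_op (\<lambda>x. 0)"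
  unfolding bounded_op_def by (auto intro: exI[of _ 0])

lemma adjoint_ex1:
  assumes T: "bounded_op T"
  shows "\<exists>!S. \<forall>x y. cinner (T x) y = cinner x (S y)"
proof -
  obtain K where K: "K \<ge> 0" "\<And>x. cnorm (T x) \<le> K * cnorm x"
    using T bounded_op_bound by metis
  have "\<exists>z. \<forall>x. cinner y (T x) = cinner z x" for y
  proof (rule riesz_representation)
    show "cinner y (T (x1 + x2)) = cinner y (T x1) + cinner y (T x2)" for x1 x2
      using T by (simp add: bounded_op_def cinner_add_right)
    show "cinner y (T (a *\<^sub>C x)) = a * cinner y (T x)" for a x
      using T by (simp add: bounded_op_def cinner_scaleC_right)
    show "cmod (cinner y (T x)) \<le> (cnorm y * K) * cnorm x" for x
      using cinner_Cauchy_Schwarz[of y "T x"] mult_left_mono[OF K(2)[of x] cnorm_nonneg[of y]]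
      by (simp add: mult.assoc)
  qed
  then obtain S where S: "\<And>y x. cinner y (T x) = cinner (S y) x"
    by metis
  show ?thesis
  proof
    show "\<forall>x y. cinner (T x) y = cinner x (S y)"
      by (metis S cinner_commute)
    show "S' = S" if "\<forall>x y. cinner (T x) y = cinner x (S' y)" for S'
      using that by (intro ext cinner_ext) (metis S cinner_commute)
  qed
qed

lemma cinner_adjoint: "bounded_op T \<Longrightarrow> cinner (T x) y = cinner x (adjoint T y)"
  using theI'[OF adjoint_ex1] unfolding adjoint_def by blast

lemma adjoint_eqI:
  assumes "bounded_op T" and "\<And>x y. cinner (T x) y = cinner x (S y)"
  shows "adjoint T = S"
  unfolding adjoint_def using assms by (intro the1_equality[OF adjoint_ex1]) blast+

lemma bounded_op_adjoint:
  assumes T: "bounded_op T"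
  shows "bounded_op (adjoint T)"
proof -
  obtain K where K: "K \<ge> 0" "\<And>x. cnorm (T x) \<le> K * cnorm x"
    using T bounded_op_bound by metis
  have "cnorm (adjoint T y) \<le> K * cnorm y" for y
  proof -
    let ?z = "adjoint T y"
    have "(cnorm ?z)\<^sup>2 = Re (cinner (T ?z) y)"
      by (simp add: cinner_adjoint[OF T] cinner_self_eq_cnorm_sq)
    also have "\<dots> \<le> cnorm (T ?z) * cnorm y"
      using complex_Re_le_cmod cinner_Cauchy_Schwarz by (rule order_trans)
    also have "\<dots> \<le> cnorm ?z * (K * cnorm y)"
      using mult_right_mono[OF K(2) cnorm_nonneg] by (simp add: mult_ac)
    finally show ?thesis
      using K(1) cnorm_nonneg[of ?z] cnorm_nonneg[of y]
      by (cases "cnorm ?z = 0") (simp_all add: power2_eq_square)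
  qed
  moreover have "adjoint T (x + y) = adjoint T x + adjoint T y" for x y
    by (rule cinner_ext) (simp add: cinner_adjoint[OF T, symmetric] cinner_add_right)
  moreover have "adjoint T (a *\<^sub>C x) = a *\<^sub>C adjoint T x" for a x
    by (rule cinner_ext) (simp add: cinner_adjoint[OF T, symmetric] cinner_scaleC_right)
  ultimately show ?thesis
    unfolding bounded_op_def by blast
qed

lemma adjoint_add:
  "bounded_op S \<Longrightarrow> bounded_op T \<Longrightarrow> adjoint (\<lambda>x. S x + T x) = (\<lambda>y. adjoint S y + adjoint T y)"
  by (intro adjoint_eqI bounded_op_add) (simp_all add: cinner_add_left cinner_add_right cinner_adjoint)

lemma adjoint_scaleC:
  "bounded_op T \<Longrightarrow> adjoint (\<lambda>x. c *\<^sub>C T x) = (\<lambda>y. cnj c *\<^sub>C adjoint T y)"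
  by (intro adjoint_eqI bounded_op_scaleC) (simp_all add: cinner_scaleC_left cinner_scaleC_right cinner_adjoint)

lemma bounded_op_op_Re: "bounded_op T \<Longrightarrow> bounded_op (op_Re T)"
  unfolding op_Re_def by (intro bounded_op_scaleC bounded_op_add bounded_op_adjoint)

lemma op_Re_add:
  "bounded_op S \<Longrightarrow> bounded_op T \<Longrightarrow> op_Re (\<lambda>x. S x + T x) = (\<lambda>x. op_Re S x + op_Re T x)"
  by (simp add: op_Re_def adjoint_add scaleC.scale_right_distrib add_ac)

lemma op_Re_scaleC_of_real:
  "bounded_op T \<Longrightarrow> op_Re (\<lambda>x. of_real r *\<^sub>C T x) = (\<lambda>x. of_real r *\<^sub>C op_Re T x)"
  by (simp add: op_Re_def adjoint_scaleC scaleC.scale_right_distrib scaleC.scale_left_commute)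

lemma op_Re_cartesian:
  "bounded_op T \<Longrightarrow> T x = op_Re T x - \<i> *\<^sub>C op_Re (\<lambda>x. \<i> *\<^sub>C T x) x"
  by (simp add: op_Re_def adjoint_scaleC scaleC.scale_right_distrib scaleC.scale_right_diff_distrib
      scaleC.scale_left_distrib[symmetric])

section \<open>The norm w_(N,e)\<close>

definition wNe_term ::
    "(('a::chilbert \<Rightarrow> 'a) \<Rightarrow> real) \<Rightarrow> ('a \<Rightarrow> 'a) \<Rightarrow> ('a \<Rightarrow> 'a) \<Rightarrow> complex \<Rightarrow> complex \<Rightarrow> real \<Rightarrow> real"
  where "wNe_term N B C l1 l2 \<theta> = N (op_Re (\<lambda>x. exp (\<i> * of_real \<theta>) *\<^sub>C (l1 *\<^sub>C B x + l2 *\<^sub>C C x)))"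

lemma wNe_set_eq:
  "wNe_set N B C = {wNe_term N B C l1 l2 \<theta> | l1 l2 \<theta>. (cmod l1)\<^sup>2 + (cmod l2)\<^sup>2 \<le> 1}"
  by (simp add: wNe_set_def wNe_term_def)

lemma wNe_term_in_wNe_set:
  "(cmod l1)\<^sup>2 + (cmod l2)\<^sup>2 \<le> 1 \<Longrightarrow> wNe_term N B C l1 l2 \<theta> \<in> wNe_set N B C"
  unfolding wNe_set_eq by blast

lemma wNe_set_not_empty: "wNe_set N B C \<noteq> {}"
  using wNe_term_in_wNe_set[of 0 0 N B C 0] by auto

lemma bounded_op_rotated_combination:
  "bounded_op B \<Longrightarrow> bounded_op C \<Longrightarrow> bounded_op (\<lambda>x. a *\<^sub>C (l1 *\<^sub>C B x + l2 *\<^sub>C C x))"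
  by (intro bounded_op_scaleC bounded_op_add)

locale op_norm =
  fixes N :: "('a::chilbert \<Rightarrow> 'a) \<Rightarrow> real"
  assumes is_op_norm: "is_op_norm N"
begin

lemma N_nonneg: "bounded_op T \<Longrightarrow> 0 \<le> N T"
  using is_op_norm by (simp add: is_op_norm_def)

lemma N_eq_0_iff: "bounded_op T \<Longrightarrow> N T = 0 \<longleftrightarrow> T = (\<lambda>x. 0)"
  using is_op_norm by (simp add: is_op_norm_def)

lemma N_scaleC: "bounded_op T \<Longrightarrow> N (\<lambda>x. c *\<^sub>C T x) = cmod c * N T"
  using is_op_norm by (simp add: is_op_norm_def)

lemma N_add_le: "bounded_op S \<Longrightarrow> bounded_op T \<Longrightarrow> N (\<lambda>x. S x + T x) \<le> N S + N T"
  using is_op_norm by (simp add: is_op_norm_def)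

lemma N_combination_le:
  assumes "bounded_op B" "bounded_op C" "cmod u \<le> 1" "cmod v \<le> 1"
  shows "N (\<lambda>x. u *\<^sub>C B x + v *\<^sub>C C x) \<le> N B + N C"
proof -
  have "N (\<lambda>x. u *\<^sub>C B x + v *\<^sub>C C x) \<le> cmod u * N B + cmod v * N C"
    using assms N_add_le[of "\<lambda>x. u *\<^sub>C B x" "\<lambda>x. v *\<^sub>C C x"] by (simp add: bounded_op_scaleC N_scaleC)
  also have "\<dots> \<le> N B + N C"
    using assms by (intro add_mono mult_left_le_one_le N_nonneg) simp_all
  finally show ?thesis .
qed

lemma N_op_Re_le: "bounded_op T \<Longrightarrow> N (op_Re T) \<le> (N T + N (adjoint T)) / 2"
  using N_add_le[of T "adjoint T"]
  by (simp add: op_Re_def N_scaleC bounded_op_add bounded_op_adjoint)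

lemma wNe_term_nonneg: "bounded_op B \<Longrightarrow> bounded_op C \<Longrightarrow> 0 \<le> wNe_term N B C l1 l2 \<theta>"
  unfolding wNe_term_def by (intro N_nonneg bounded_op_op_Re bounded_op_rotated_combination)

lemma wNe_term_le:
  assumes B: "bounded_op B" and C: "bounded_op C" and l: "(cmod l1)\<^sup>2 + (cmod l2)\<^sup>2 \<le> 1"
  shows "wNe_term N B C l1 l2 \<theta> \<le> (N B + N C + N (adjoint B) + N (adjoint C)) / 2"
proof -
  define u where "u = exp (\<i> * of_real \<theta>) * l1"
  define v where "v = exp (\<i> * of_real \<theta>) * l2"
  have "(cmod l1)\<^sup>2 \<le> 1" "(cmod l2)\<^sup>2 \<le> 1"
    using l zero_le_power2[of "cmod l1"] zero_le_power2[of "cmod l2"] by linarith+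
  then have uv: "cmod u \<le> 1" "cmod v \<le> 1"
    by (simp_all add: u_def v_def norm_mult abs_square_le_1)
  define E where "E = (\<lambda>x. u *\<^sub>C B x + v *\<^sub>C C x)"
  have E: "bounded_op E"
    unfolding E_def using B C by (intro bounded_op_add bounded_op_scaleC)
  have "adjoint E = (\<lambda>x. cnj u *\<^sub>C adjoint B x + cnj v *\<^sub>C adjoint C x)"
    unfolding E_def using B C by (simp add: adjoint_add bounded_op_scaleC adjoint_scaleC)
  then have "N (adjoint E) \<le> N (adjoint B) + N (adjoint C)"
    using uv by (simp add: N_combination_le bounded_op_adjoint B C)
  moreover have "N E \<le> N B + N C"
    unfolding E_def using B C uv by (rule N_combination_le)
  moreover have "wNe_term N B C l1 l2 \<theta> = N (op_Re E)"
    by (simp add: wNe_term_def E_def u_def v_def scaleC.scale_right_distrib)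
  ultimately show ?thesis
    using N_op_Re_le[OF E] by argo
qed

lemma wNe_term_add_le:
  assumes "bounded_op B" "bounded_op C" "bounded_op B'" "bounded_op C'"
  shows "wNe_term N (\<lambda>x. B x + B' x) (\<lambda>x. C x + C' x) l1 l2 \<theta>
    \<le> wNe_term N B C l1 l2 \<theta> + wNe_term N B' C' l1 l2 \<theta>"
proof -
  let ?E = "\<lambda>B C x. exp (\<i> * of_real \<theta>) *\<^sub>C (l1 *\<^sub>C B x + l2 *\<^sub>C C x)"
  have "?E (\<lambda>x. B x + B' x) (\<lambda>x. C x + C' x) = (\<lambda>x. ?E B C x + ?E B' C' x)"
    by (simp add: algebra_simps)
  with assms show ?thesis
    unfolding wNe_term_def
    by (simp add: op_Re_add bounded_op_rotated_combination N_add_le bounded_op_op_Re)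
qed

lemma wNe_term_scaleC:
  assumes "bounded_op B" "bounded_op C"
  shows "wNe_term N (\<lambda>x. c *\<^sub>C B x) (\<lambda>x. c *\<^sub>C C x) l1 l2 \<theta>
    = cmod c * wNe_term N B C l1 l2 (\<theta> + Arg c)"
proof -
  define \<phi> where "\<phi> = Arg c"
  have c: "c = of_real (cmod c) * exp (\<i> * of_real \<phi>)"
    unfolding \<phi>_def by (metis rcis_cmod_Arg rcis_def cis_conv_exp)
  define E where "E = (\<lambda>x. exp (\<i> * of_real (\<theta> + \<phi>)) *\<^sub>C (l1 *\<^sub>C B x + l2 *\<^sub>C C x))"
  have E: "bounded_op E"
    unfolding E_def using assms by (rule bounded_op_rotated_combination)
  have "(\<lambda>x. exp (\<i> * of_real \<theta>) *\<^sub>C (l1 *\<^sub>C (c *\<^sub>C B x) + l2 *\<^sub>C (c *\<^sub>C C x)))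
      = (\<lambda>x. of_real (cmod c) *\<^sub>C E x)"
    unfolding E_def
    by (subst (1 2) c) (simp add: scaleC.scale_right_distrib distrib_left exp_add mult_ac)
  then have "wNe_term N (\<lambda>x. c *\<^sub>C B x) (\<lambda>x. c *\<^sub>C C x) l1 l2 \<theta>
      = N (\<lambda>x. of_real (cmod c) *\<^sub>C op_Re E x)"
    by (simp only: wNe_term_def op_Re_scaleC_of_real[OF E])
  also have "\<dots> = cmod c * N (op_Re E)"
    using N_scaleC[OF bounded_op_op_Re[OF E], of "of_real (cmod c)"] by simp
  finally show ?thesis
    by (simp add: wNe_term_def E_def \<phi>_def)
qed

lemma wNe_term_unit_vectors:
  "wNe_term N B C 1 0 0 = N (op_Re B)"
  "wNe_term N B C 1 0 (pi / 2) = N (op_Re (\<lambda>x. \<i> *\<^sub>C B x))"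
  "wNe_term N B C 0 1 0 = N (op_Re C)"
  "wNe_term N B C 0 1 (pi / 2) = N (op_Re (\<lambda>x. \<i> *\<^sub>C C x))"
  using cis_pi_half by (simp_all add: wNe_term_def cis_conv_exp)

lemma bdd_above_wNe_set: "bounded_op B \<Longrightarrow> bounded_op C \<Longrightarrow> bdd_above (wNe_set N B C)"
  unfolding wNe_set_eq bdd_above_def using wNe_term_le by blast

lemma wNe_term_le_wNe:
  "bounded_op B \<Longrightarrow> bounded_op C \<Longrightarrow> (cmod l1)\<^sup>2 + (cmod l2)\<^sup>2 \<le> 1
    \<Longrightarrow> wNe_term N B C l1 l2 \<theta> \<le> wNe N B C"
  unfolding wNe_def by (intro cSup_upper wNe_term_in_wNe_set bdd_above_wNe_set)

lemma wNe_leI: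
  "(\<And>l1 l2 \<theta>. (cmod l1)\<^sup>2 + (cmod l2)\<^sup>2 \<le> 1 \<Longrightarrow> wNe_term N B C l1 l2 \<theta> \<le> M) \<Longrightarrow> wNe N B C \<le> M"
  unfolding wNe_def by (rule cSup_least[OF wNe_set_not_empty]) (auto simp: wNe_set_eq)

lemma wNe_nonneg:
  assumes "bounded_op B" "bounded_op C"
  shows "0 \<le> wNe N B C"
  using order_trans[OF wNe_term_nonneg[OF assms] wNe_term_le_wNe[OF assms, of 0 0]] by simp

lemma wNe_add_le:
  assumes "bounded_op B" "bounded_op C" "bounded_op B'" "bounded_op C'"
  shows "wNe N (\<lambda>x. B x + B' x) (\<lambda>x. C x + C' x) \<le> wNe N B C + wNe N B' C'"
  using assms by (intro wNe_leI order_trans[OF wNe_term_add_le] add_mono wNe_term_le_wNe)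

lemma wNe_scaleC_le:
  assumes "bounded_op B" "bounded_op C"
  shows "wNe N (\<lambda>x. c *\<^sub>C B x) (\<lambda>x. c *\<^sub>C C x) \<le> cmod c * wNe N B C"
  using assms
  by (intro wNe_leI) (simp add: wNe_term_scaleC mult_left_mono wNe_term_le_wNe)

lemma wNe_zero: "wNe N (\<lambda>x. 0) (\<lambda>x. 0) = 0"
  using wNe_scaleC_le[OF bounded_op_zero bounded_op_zero, of 0] wNe_nonneg[OF bounded_op_zero bounded_op_zero]
  by simp

lemma eq_0_if_N_op_Re_eq_0:
  assumes T: "bounded_op T"
    and "N (op_Re T) = 0" and "N (op_Re (\<lambda>x. \<i> *\<^sub>C T x)) = 0"
  shows "T = (\<lambda>x. 0)"
proof -
  have "op_Re T = (\<lambda>x. 0)" "op_Re (\<lambda>x. \<i> *\<^sub>C T x) = (\<lambda>x. 0)"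
    using assms by (simp_all add: N_eq_0_iff bounded_op_op_Re bounded_op_scaleC)
  show ?thesis
  proof
    fix x
    have "T x = op_Re T x - \<i> *\<^sub>C op_Re (\<lambda>x. \<i> *\<^sub>C T x) x"
      by (rule op_Re_cartesian[OF T])
    also have "\<dots> = 0"
      by (simp add: \<open>op_Re T = (\<lambda>x. 0)\<close> \<open>op_Re (\<lambda>x. \<i> *\<^sub>C T x) = (\<lambda>x. 0)\<close>)
    finally show "T x = 0" .
  qed
qed

lemma wNe_eq_0_iff:
  assumes B: "bounded_op B" and C: "bounded_op C"
  shows "wNe N B C = 0 \<longleftrightarrow> B = (\<lambda>x. 0) \<and> C = (\<lambda>x. 0)"
proof
  assume "wNe N B C = 0"
  then have vanish: "wNe_term N B C l1 l2 \<theta> = 0" if "(cmod l1)\<^sup>2 + (cmod l2)\<^sup>2 \<le> 1" for l1 l2 \<theta>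
    using wNe_term_le_wNe[OF B C that] wNe_term_nonneg[OF B C] by (simp add: order_antisym)
  have "N (op_Re B) = 0" "N (op_Re (\<lambda>x. \<i> *\<^sub>C B x)) = 0"
    "N (op_Re C) = 0" "N (op_Re (\<lambda>x. \<i> *\<^sub>C C x)) = 0"
    using vanish[of 1 0] vanish[of 0 1] by (simp_all flip: wNe_term_unit_vectors[of B C])
  then show "B = (\<lambda>x. 0) \<and> C = (\<lambda>x. 0)"
    using eq_0_if_N_op_Re_eq_0[OF B] eq_0_if_N_op_Re_eq_0[OF C] by blast
qed (simp add: wNe_zero)

lemma wNe_scaleC:
  assumes B: "bounded_op B" and C: "bounded_op C"
  shows "wNe N (\<lambda>x. c *\<^sub>C B x) (\<lambda>x. c *\<^sub>C C x) = cmod c * wNe N B C"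
proof (cases "c = 0")
  case False
  have "wNe N B C = wNe N (\<lambda>x. inverse c *\<^sub>C (c *\<^sub>C B x)) (\<lambda>x. inverse c *\<^sub>C (c *\<^sub>C C x))"
    using False by simp
  also have "\<dots> \<le> cmod (inverse c) * wNe N (\<lambda>x. c *\<^sub>C B x) (\<lambda>x. c *\<^sub>C C x)"
    using B C by (intro wNe_scaleC_le bounded_op_scaleC)
  finally have "cmod c * wNe N B C \<le> cmod c * (cmod (inverse c) * wNe N (\<lambda>x. c *\<^sub>C B x) (\<lambda>x. c *\<^sub>C C x))"
    by (rule mult_left_mono) simp
  also have "\<dots> = wNe N (\<lambda>x. c *\<^sub>C B x) (\<lambda>x. c *\<^sub>C C x)"
    using False by (simp add: norm_inverse)
  finally show ?thesis
    using wNe_scaleC_le[OF B C] by (rule antisym[rotated])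
qed (simp add: wNe_zero)

end

theorem theorem2p2:
  fixes N :: "('h::chilbert \<Rightarrow> 'h) \<Rightarrow> real"
  assumes "is_op_norm N"
  shows "(\<forall>B C. bounded_op B \<longrightarrow> bounded_op C \<longrightarrow>
            bdd_above (wNe_set N B C) \<and> 0 \<le> wNe N B C) \<and>
         (\<forall>B C. bounded_op B \<longrightarrow> bounded_op C \<longrightarrow>
            (wNe N B C = 0 \<longleftrightarrow> B = (\<lambda>x. 0) \<and> C = (\<lambda>x. 0))) \<and>
         (\<forall>c B C. bounded_op B \<longrightarrow> bounded_op C \<longrightarrow>
            wNe N (\<lambda>x. c *\<^sub>C B x) (\<lambda>x. c *\<^sub>C C x) = cmod c * wNe N B C) \<and>
         (\<forall>B C B' C'. bounded_op B \<longrightarrow> bounded_op C \<longrightarrow> bounded_op B' \<longrightarrow> bounded_op C' \<longrightarrow>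
            wNe N (\<lambda>x. B x + B' x) (\<lambda>x. C x + C' x) \<le> wNe N B C + wNe N B' C')"
proof -
  interpret op_norm N
    by (rule op_norm.intro) (rule assms)
  show ?thesis
    by (simp add: bdd_above_wNe_set wNe_nonneg wNe_eq_0_iff wNe_scaleC wNe_add_le)
qed

end
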